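(* In the setting of the context, suppose that $\mathcal{Q}$ satisfies Condition I (for all $i\in\{1,\dots,d\}$ and all $Z\in\mathcal{Q}$, $ZR^i\in L^1$), that $\Pi^\rho_0=\{\mathbf{0}\}$, and that $\tilde{\mathcal{Q}}_{\max}\ne\emptyset$. Then the following are equivalent: (a) the market does not admit $\rho$-arbitrage; (b) $\tilde{\mathcal{Q}}\cap\mathcal{P}\ne\emptyset$ for some nonempty $\tilde{\mathcal{Q}}\subset\mathcal{Q}$ satisfying Conditions POS, MIX and INT; (c) $\tilde{\mathcal{Q}}\cap\mathcal{P}\ne\emptyset$ for all nonempty $\tilde{\mathcal{Q}}\subset\mathcal{Q}$ satisfying Conditions POS, MIX and INT.
   Context: Let $(\Omega,\mathcal{F},\mathbb{P})$ be a probability space and a market: riskless asset $S^0_0=1$, $S^0_1=1+r$, $r>-1$; risky assets $S^1,\dots,S^d$ with constants $S^i_0>0$ and real-valued $\mathcal{F}$-measurable $S^i_1$; returns $R^i:=(S^i_1-S^i_0)/S^i_0$. Standing assumptions: nonredundancy (if $\theta\in\mathbb{R}^{1+d}$ with $\sum_{i=0}^d\theta^iS^i_t=0$ a.s. for $t\in\{0,1\}$ then $\theta=0$), $R^i\in L^1$, $\mathbb{E}[R^i]\ne r$ for some $i$. Excess return of $\pi\in\mathbb{R}^d$: $X_\pi:=\pi\cdot(R-r\mathbf{1})$; $\Pi_0:=\{\pi:\mathbb{E}[X_\pi]=0\}$; $\Pi^\rho_0$ is the set of $\pi\in\Pi_0$ with $\rho(X_\pi)<\infty$ and $\rho(X_\pi)\le\rho(X_{\pi'})$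 for all $\pi'\in\Pi_0$. $L$ is a Riesz space with $L^\infty\subset L\subset L^1$ containing all $X_\pi$. $\mathcal{D}:=\{Z\in L^1:Z\ge0 \text{ a.s.},\mathbb{E}[Z]=1\}$; $\mathcal{Q}\subset\mathcal{D}$ is convex with $1\in\mathcal{Q}$ and $\rho(X)=\sup_{Z\in\mathcal{Q}}\mathbb{E}[-ZX]$ on $L$, with $\mathbb{E}[-ZX]:=\mathbb{E}[ZX^-]-\mathbb{E}[ZX^+]$ and $\mathbb{E}[-ZX]=\infty$ if $\mathbb{E}[ZX^-]=\infty$. $\mathcal{M}:=\{Z\in\mathcal{D}:\mathbb{E}[Z(R^i-r)]=0\ \forall i\}$, $\mathcal{P}:=\{Z\in\mathcal{M}:Z>0 \text{ a.s.}\}$. For $\tilde{\mathcal{Q}}\subset\mathcal{Q}$: POS: every $\tilde Z\in\tilde{\mathcal{Q}}$ satisfies $\tilde Z>0$ a.s.; MIX: $\lambda Z+(1-\lambda)\tilde Z\in\tilde{\mathcal{Q}}$ for all $Z\in\mathcal{Q}$, $\tilde Z\in\tilde{\mathcal{Q}}$, $\lambda\in(0,1)$; INT: for every $\tilde Z\in\tilde{\mathcal{Q}}$ there is an $L^\infty$-dense subset $\mathcal{E}$ of $\mathcal{D}\cap L^\infty$ such that for every $Z\in\mathcal{E}$ there is $\lambda\in(0,1)$ with $\lambda Z+(1-\lambda)\tilde Z\in\mathcal{Q}$. $\tilde{\mathcal{Q}}_{\max}$ is the set of $\tilde Z\in\mathcal{Q}$ with $\tilde Z>0$ a.s. for which there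 is an $L^\infty$-dense subset $\mathcal{E}$ of $\mathcal{D}\cap L^\infty$ such that for every $Z\in\mathcal{E}$ there is $\lambda\in(0,1)$ with $\lambda Z+(1-\lambda)\tilde Z\in\mathcal{Q}$. Strictly $\rho$-preferred, $\rho$-efficient: $\pi$ is $\rho$-efficient if $\mathbb{E}[X_\pi]\ge0$ and there is no $\pi'$ with $\mathbb{E}[X_{\pi'}]\ge\mathbb{E}[X_\pi]$, $\rho(X_{\pi'})\le\rho(X_\pi)$, one inequality strict. $\rho$-arbitrage: no $\rho$-efficient portfolio exists. *)

theory Defs
  imports "HOL-Probability.Probability"
begin

text \<open>One-period market. The risky assets are indexed by a finite type 'n (so d = CARD('n)).
  S0 i = S^i_0 (constants), S1 i = S^i_1 (random variables), r the riskless rate.\<close>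

definition ret :: "('n \<Rightarrow> real) \<Rightarrow> ('n \<Rightarrow> 'a \<Rightarrow> real) \<Rightarrow> 'n \<Rightarrow> 'a \<Rightarrow> real" where
  "ret S0 S1 i \<omega> = (S1 i \<omega> - S0 i) / S0 i"

definition excess :: "real \<Rightarrow> ('n::finite \<Rightarrow> real) \<Rightarrow> ('n \<Rightarrow> 'a \<Rightarrow> real) \<Rightarrow> ('n \<Rightarrow> real) \<Rightarrow> 'a \<Rightarrow> real" where
  "excess r S0 S1 p \<omega> = (\<Sum>i\<in>UNIV. p i * (ret S0 S1 i \<omega> - r))"

definition exp_negZ :: "'a measure \<Rightarrow> ('a \<Rightarrow> real) \<Rightarrow> ('a \<Rightarrow> real) \<Rightarrow> ereal" where
  "exp_negZ M Z X =
     (let a = (\<integral>\<^sup>+ \<omega>. ennreal (Z \<omega> * max 0 (- X \<omega>)) \<partial>M);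
          b = (\<integral>\<^sup>+ \<omega>. ennreal (Z \<omega> * max 0 (X \<omega>)) \<partial>M)
      in if a = \<infinity> then \<infinity> else enn2ereal a - enn2ereal b)"

definition rho :: "'a measure \<Rightarrow> ('a \<Rightarrow> real) set \<Rightarrow> ('a \<Rightarrow> real) \<Rightarrow> ereal" where
  "rho M Q X = (SUP Z\<in>Q. exp_negZ M Z X)"

definition Dens :: "'a measure \<Rightarrow> ('a \<Rightarrow> real) set" where
  "Dens M = {Z. integrable M Z \<and> (AE \<omega> in M. Z \<omega> \<ge> 0) \<and> integral\<^sup>L M Z = 1}"

definition Linf :: "'a measure \<Rightarrow> ('a \<Rightarrow> real) set" where
  "Linf M = {Z. Z \<in> borel_measurable M \<and> (\<exists>C. AE \<omega> in M. \<bar>Z \<omega>\<bar> \<le> C)}"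

definition Linf_dense_in_DLinf :: "'a measure \<Rightarrow> ('a \<Rightarrow> real) set \<Rightarrow> bool" where
  "Linf_dense_in_DLinf M E \<longleftrightarrow> E \<subseteq> Dens M \<inter> Linf M \<and>
     (\<forall>Z\<in>Dens M \<inter> Linf M. \<forall>\<epsilon>>0. \<exists>Z'\<in>E. AE \<omega> in M. \<bar>Z \<omega> - Z' \<omega>\<bar> \<le> \<epsilon>)"

text \<open>A set of random variables representing a set of L^1-classes: closed under a.s. equality.\<close>
definition ae_saturated :: "'a measure \<Rightarrow> ('a \<Rightarrow> real) set \<Rightarrow> bool" where
  "ae_saturated M A \<longleftrightarrow> (\<forall>Z\<in>A. \<forall>Z'. Z' \<in> borel_measurable M \<and> (AE \<omega> in M. Z \<omega> = Z' \<omega>) \<longrightarrow> Z' \<in> A)"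

definition mix :: "real \<Rightarrow> ('a \<Rightarrow> real) \<Rightarrow> ('a \<Rightarrow> real) \<Rightarrow> 'a \<Rightarrow> real" where
  "mix t Z Z' \<omega> = t * Z \<omega> + (1 - t) * Z' \<omega>"

definition Mset :: "'a measure \<Rightarrow> real \<Rightarrow> ('n \<Rightarrow> real) \<Rightarrow> ('n \<Rightarrow> 'a \<Rightarrow> real) \<Rightarrow> ('a \<Rightarrow> real) set" where
  "Mset M r S0 S1 = {Z\<in>Dens M. \<forall>i. integrable M (\<lambda>\<omega>. Z \<omega> * (ret S0 S1 i \<omega> - r)) \<and>
        (\<integral>\<omega>. Z \<omega> * (ret S0 S1 i \<omega> - r) \<partial>M) = 0}"

definition Pset :: "'a measure \<Rightarrow> real \<Rightarrow> ('n \<Rightarrow> real) \<Rightarrow> ('n \<Rightarrow> 'a \<Rightarrow> real) \<Rightarrow> ('a \<Rightarrow> real) set" where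
  "Pset M r S0 S1 = {Z\<in>Mset M r S0 S1. AE \<omega> in M. Z \<omega> > 0}"

definition Pi0 :: "'a measure \<Rightarrow> real \<Rightarrow> ('n::finite \<Rightarrow> real) \<Rightarrow> ('n \<Rightarrow> 'a \<Rightarrow> real) \<Rightarrow> ('n \<Rightarrow> real) set" where
  "Pi0 M r S0 S1 = {p. integral\<^sup>L M (excess r S0 S1 p) = 0}"

definition Pi0_rho :: "'a measure \<Rightarrow> ('a \<Rightarrow> real) set \<Rightarrow> real \<Rightarrow> ('n::finite \<Rightarrow> real) \<Rightarrow> ('n \<Rightarrow> 'a \<Rightarrow> real) \<Rightarrow> ('n \<Rightarrow> real) set" where
  "Pi0_rho M Q r S0 S1 = {p\<in>Pi0 M r S0 S1. rho M Q (excess r S0 S1 p) < \<infinity> \<and>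
      (\<forall>p'\<in>Pi0 M r S0 S1. rho M Q (excess r S0 S1 p) \<le> rho M Q (excess r S0 S1 p'))}"

definition rho_efficient :: "'a measure \<Rightarrow> ('a \<Rightarrow> real) set \<Rightarrow> real \<Rightarrow> ('n::finite \<Rightarrow> real) \<Rightarrow> ('n \<Rightarrow> 'a \<Rightarrow> real) \<Rightarrow> ('n \<Rightarrow> real) \<Rightarrow> bool" where
  "rho_efficient M Q r S0 S1 p \<longleftrightarrow>
     integral\<^sup>L M (excess r S0 S1 p) \<ge> 0 \<and>
     \<not> (\<exists>p'. integral\<^sup>L M (excess r S0 S1 p') \<ge> integral\<^sup>L M (excess r S0 S1 p) \<and>
             rho M Q (excess r S0 S1 p') \<le> rho M Q (excess r S0 S1 p) \<and>
             (integral\<^sup>L M (excess r S0 S1 p') > integral\<^sup>L M (excess r S0 S1 p) \<or>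
              rho M Q (excess r S0 S1 p') < rho M Q (excess r S0 S1 p)))"

definition rho_arbitrage :: "'a measure \<Rightarrow> ('a \<Rightarrow> real) set \<Rightarrow> real \<Rightarrow> ('n::finite \<Rightarrow> real) \<Rightarrow> ('n \<Rightarrow> 'a \<Rightarrow> real) \<Rightarrow> bool" where
  "rho_arbitrage M Q r S0 S1 \<longleftrightarrow> \<not> (\<exists>p. rho_efficient M Q r S0 S1 p)"

definition cond_POS :: "'a measure \<Rightarrow> ('a \<Rightarrow> real) set \<Rightarrow> bool" where
  "cond_POS M Qt \<longleftrightarrow> (\<forall>Z\<in>Qt. AE \<omega> in M. Z \<omega> > 0)"

definition cond_MIX :: "('a \<Rightarrow> real) set \<Rightarrow> ('a \<Rightarrow> real) set \<Rightarrow> bool" where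
  "cond_MIX Q Qt \<longleftrightarrow> (\<forall>Z\<in>Q. \<forall>Zt\<in>Qt. \<forall>t\<in>{0<..<1}. mix t Z Zt \<in> Qt)"

definition cond_INT :: "'a measure \<Rightarrow> ('a \<Rightarrow> real) set \<Rightarrow> ('a \<Rightarrow> real) set \<Rightarrow> bool" where
  "cond_INT M Q Qt \<longleftrightarrow> (\<forall>Zt\<in>Qt. \<exists>E. Linf_dense_in_DLinf M E \<and>
      (\<forall>Z\<in>E. \<exists>t\<in>{0<..<1}. mix t Z Zt \<in> Q))"

definition Qt_max :: "'a measure \<Rightarrow> ('a \<Rightarrow> real) set \<Rightarrow> ('a \<Rightarrow> real) set" where
  "Qt_max M Q = {Zt\<in>Q. (AE \<omega> in M. Zt \<omega> > 0) \<and> (\<exists>E. Linf_dense_in_DLinf M E \<and>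
      (\<forall>Z\<in>E. \<exists>t\<in>{0<..<1}. mix t Z Zt \<in> Q))}"

definition market :: "'a measure \<Rightarrow> real \<Rightarrow> ('n::finite \<Rightarrow> real) \<Rightarrow> ('n \<Rightarrow> 'a \<Rightarrow> real) \<Rightarrow> bool" where
  "market M r S0 S1 \<longleftrightarrow>
     prob_space M \<and> r > -1 \<and> (\<forall>i. S0 i > 0) \<and> (\<forall>i. S1 i \<in> borel_measurable M) \<and>
     \<comment> \<open>nonredundancy\<close>
     (\<forall>(th0::real) (th::'n \<Rightarrow> real).
        th0 + (\<Sum>i\<in>UNIV. th i * S0 i) = 0 \<and>
        (AE \<omega> in M. th0 * (1 + r) + (\<Sum>i\<in>UNIV. th i * S1 i \<omega>) = 0)
        \<longrightarrow> th0 = 0 \<and> (\<forall>i. th i = 0)) \<and>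
     (\<forall>i. integrable M (ret S0 S1 i)) \<and>
     (\<exists>i. integral\<^sup>L M (ret S0 S1 i) \<noteq> r)"

definition dual_set :: "'a measure \<Rightarrow> ('a \<Rightarrow> real) set \<Rightarrow> bool" where
  "dual_set M Q \<longleftrightarrow> Q \<subseteq> Dens M \<and> ae_saturated M Q \<and>
     (\<forall>Z1\<in>Q. \<forall>Z2\<in>Q. \<forall>t\<in>{0..1}. mix t Z1 Z2 \<in> Q) \<and> (\<lambda>_. 1) \<in> Q"

end

theory Submission
  imports Defs
begin

(* Under Condition I, E[-Z X_pi] = - pi . m(Z) for Z in Q, where m(Z)_i = E[Z (R^i - r)];
   so rho(X_pi) = sup_{Z in Q} - pi . m(Z) is governed by the convex set m(Q) in R^d.

   If there is no rho-arbitrage, every pi <> 0 has some Z in Q with pi . m(Z) < 0: otherwise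
   adding pi to a portfolio never increases its risk, so either every portfolio is dominated
   (if E[X_pi] > 0) or pi is a second element of Pi^rho_0 (if E[X_pi] = 0). Separating m(Q)
   from a ray then shows that m(Q) contains -s m(Zt) with s > 0 for any Zt in Qt, and the
   mixture of the corresponding Z and Zt with weights 1 : s lies in Qt by MIX, has m = 0 and
   is strictly positive by POS.

   Conversely, let Zt be in Qt and P and pi <> 0. Since E[Zt X_pi] = 0 and Zt > 0,
   nonredundancy forces X_pi < 0 with positive probability. A bounded density from the dense
   set of INT that is close to the normalised indicator of {X_pi < 0} has E[Z X_pi] < 0, and
   its mixture with Zt lies in Q; hence rho(X_pi) > 0 = rho(0) and the zero portfolio is
   rho-efficient. Finally Qt_max itself satisfies POS, MIX and INT, which links the
   existential and the universal form of the criterion. *)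

lemma exp_negZ_eq_integral:
  fixes Z X :: "'a \<Rightarrow> real"
  assumes Zm: "Z \<in> borel_measurable M" and Xm: "X \<in> borel_measurable M"
    and int: "integrable M (\<lambda>\<omega>. Z \<omega> * X \<omega>)" and nonneg: "AE \<omega> in M. Z \<omega> \<ge> 0"
  shows "exp_negZ M Z X = ereal (- (\<integral>\<omega>. Z \<omega> * X \<omega> \<partial>M))"
proof -
  have int_neg: "integrable M (\<lambda>\<omega>. Z \<omega> * max 0 (- X \<omega>))"
    and int_pos: "integrable M (\<lambda>\<omega>. Z \<omega> * max 0 (X \<omega>))"
    by (rule Bochner_Integration.integrable_bound[OF int];
        use Zm Xm in \<open>auto simp: abs_mult intro!: mult_left_mono\<close>)+
  have "(\<integral>\<^sup>+ \<omega>. ennreal (Z \<omega> * max 0 (- X \<omega>)) \<partial>M) = ennreal (\<integral>\<omega>. Z \<omega> * max 0 (- X \<omega>) \<partial>M)"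
    "(\<integral>\<^sup>+ \<omega>. ennreal (Z \<omega> * max 0 (X \<omega>)) \<partial>M) = ennreal (\<integral>\<omega>. Z \<omega> * max 0 (X \<omega>) \<partial>M)"
    using nonneg by (auto intro!: nn_integral_eq_integral int_neg int_pos)
  moreover have "(\<integral>\<omega>. Z \<omega> * max 0 (- X \<omega>) \<partial>M) \<ge> 0" "(\<integral>\<omega>. Z \<omega> * max 0 (X \<omega>) \<partial>M) \<ge> 0"
    using nonneg by (auto intro!: integral_nonneg_AE)
  moreover have "(\<integral>\<omega>. Z \<omega> * max 0 (- X \<omega>) \<partial>M) - (\<integral>\<omega>. Z \<omega> * max 0 (X \<omega>) \<partial>M)
      = - (\<integral>\<omega>. Z \<omega> * X \<omega> \<partial>M)"
  proof -
    have "(\<lambda>\<omega>. Z \<omega> * max 0 (- X \<omega>) - Z \<omega> * max 0 (X \<omega>)) = (\<lambda>\<omega>. - (Z \<omega> * X \<omega>))"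
      by (auto simp: max_def algebra_simps)
    then show ?thesis
      using Bochner_Integration.integral_diff[OF int_neg int_pos] by simp
  qed
  ultimately show ?thesis
    by (simp add: exp_negZ_def Let_def)
qed

lemma integrable_Linf_mult:
  fixes Z X :: "'a \<Rightarrow> real"
  assumes "Z \<in> Linf M" and X: "integrable M X"
  shows "integrable M (\<lambda>\<omega>. Z \<omega> * X \<omega>)"
proof -
  obtain C where Zm: "Z \<in> borel_measurable M" and bound: "AE \<omega> in M. \<bar>Z \<omega>\<bar> \<le> C"
    using assms(1) by (auto simp: Linf_def)
  show ?thesis
  proof (rule Bochner_Integration.integrable_bound[of _ "\<lambda>\<omega>. C * \<bar>X \<omega>\<bar>"])
    show "integrable M (\<lambda>\<omega>. C * \<bar>X \<omega>\<bar>)" using X by auto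
    show "(\<lambda>\<omega>. Z \<omega> * X \<omega>) \<in> borel_measurable M" using Zm X by auto
    show "AE \<omega> in M. norm (Z \<omega> * X \<omega>) \<le> norm (C * \<bar>X \<omega>\<bar>)"
      using bound by eventually_elim (auto simp: abs_mult intro!: mult_right_mono)
  qed
qed

lemma integral_mult_Linf_le:
  fixes Z Z' X :: "'a \<Rightarrow> real"
  assumes Z: "Z \<in> Linf M" and Z': "Z' \<in> Linf M" and X: "integrable M X"
    and close: "AE \<omega> in M. \<bar>Z \<omega> - Z' \<omega>\<bar> \<le> \<epsilon>"
  shows "(\<integral>\<omega>. Z' \<omega> * X \<omega> \<partial>M) \<le> (\<integral>\<omega>. Z \<omega> * X \<omega> \<partial>M) + \<epsilon> * (\<integral>\<omega>. \<bar>X \<omega>\<bar> \<partial>M)"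
proof -
  have ZX: "integrable M (\<lambda>\<omega>. Z \<omega> * X \<omega>)" and Z'X: "integrable M (\<lambda>\<omega>. Z' \<omega> * X \<omega>)"
    using Z Z' X by (auto intro: integrable_Linf_mult)
  have "AE \<omega> in M. Z' \<omega> * X \<omega> \<le> Z \<omega> * X \<omega> + \<epsilon> * \<bar>X \<omega>\<bar>"
    using close
  proof eventually_elim
    case (elim \<omega>)
    have "(Z' \<omega> - Z \<omega>) * X \<omega> \<le> \<bar>Z \<omega> - Z' \<omega>\<bar> * \<bar>X \<omega>\<bar>"
      by (metis abs_ge_self abs_minus_commute abs_mult)
    also have "\<dots> \<le> \<epsilon> * \<bar>X \<omega>\<bar>"
      using elim by (intro mult_right_mono) auto
    finally show ?case by (simp add: algebra_simps)
  qed
  then have "(\<integral>\<omega>. Z' \<omega> * X \<omega> \<partial>M) \<le> (\<integral>\<omega>. Z \<omega> * X \<omega> + \<epsilon> * \<bar>X \<omega>\<bar> \<partial>M)"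
    using ZX Z'X X by (intro integral_mono_AE) auto
  also have "\<dots> = (\<integral>\<omega>. Z \<omega> * X \<omega> \<partial>M) + \<epsilon> * (\<integral>\<omega>. \<bar>X \<omega>\<bar> \<partial>M)"
    using ZX X by simp
  finally show ?thesis .
qed

lemma (in prob_space) bounded_density_with_negative_integral:
  fixes X :: "'a \<Rightarrow> real"
  assumes X: "integrable M X" and not_nonneg: "\<not> (AE \<omega> in M. X \<omega> \<ge> 0)"
  shows "\<exists>Z\<in>Dens M \<inter> Linf M. (\<integral>\<omega>. Z \<omega> * X \<omega> \<partial>M) < 0"
proof -
  define A where "A = {\<omega>\<in>space M. X \<omega> < 0}"
  have [measurable]: "X \<in> borel_measurable M"
    using X by blast
  have A[measurable]: "A \<in> sets M"
    unfolding A_def by measurable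
  have A_pos: "emeasure M A \<noteq> 0"
  proof
    assume "emeasure M A = 0"
    then have "AE \<omega> in M. \<omega> \<notin> A"
      using A by (intro AE_not_in) (simp add: null_sets_def)
    then have "AE \<omega> in M. X \<omega> \<ge> 0"
      using AE_space by eventually_elim (auto simp: A_def)
    with not_nonneg show False ..
  qed
  then have pA: "prob A > 0"
    using emeasure_eq_measure[of A] measure_nonneg[of M A] by (auto simp del: measure_nonneg)
  define Z where "Z = (\<lambda>\<omega>. indicator A \<omega> / prob A)"
  have "integrable M Z"
    unfolding Z_def using A
    by (intro integrable_divide_zero integrable_real_indicator) (auto simp: less_top[symmetric])
  moreover have "AE \<omega> in M. \<bar>Z \<omega>\<bar> \<le> 1 / prob A"
    using pA by (auto simp: Z_def indicator_def)
  ultimately have "Z \<in> Dens M \<inter> Linf M"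
    using pA by (auto simp: Dens_def Linf_def Z_def)
  moreover have "(\<integral>\<omega>. indicator A \<omega> * X \<omega> \<partial>M) < (\<integral>\<omega>. 0 \<partial>M)"
  proof (rule integral_less_AE[OF _ _ A_pos A])
    show "integrable M (\<lambda>\<omega>. indicator A \<omega> * X \<omega>)"
      using integrable_real_mult_indicator[OF A X] by (simp add: mult.commute)
  qed (auto simp: A_def indicator_def)
  then have "(\<integral>\<omega>. Z \<omega> * X \<omega> \<partial>M) < 0"
    using pA by (simp add: Z_def divide_neg_pos)
  ultimately show ?thesis by blast
qed

lemma (in prob_space) dense_density_with_negative_integral:
  fixes X :: "'a \<Rightarrow> real"
  assumes dense: "Linf_dense_in_DLinf M E"
    and X: "integrable M X" and not_nonneg: "\<not> (AE \<omega> in M. X \<omega> \<ge> 0)"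
  shows "\<exists>Z\<in>E. integrable M (\<lambda>\<omega>. Z \<omega> * X \<omega>) \<and> (\<integral>\<omega>. Z \<omega> * X \<omega> \<partial>M) < 0"
proof -
  obtain Z0 where Z0: "Z0 \<in> Dens M \<inter> Linf M" and neg: "(\<integral>\<omega>. Z0 \<omega> * X \<omega> \<partial>M) < 0"
    using bounded_density_with_negative_integral[OF X not_nonneg] by blast
  define K where "K = (\<integral>\<omega>. \<bar>X \<omega>\<bar> \<partial>M)"
  define \<epsilon> where "\<epsilon> = - (\<integral>\<omega>. Z0 \<omega> * X \<omega> \<partial>M) / (2 * (K + 1))"
  have K: "K \<ge> 0"
    unfolding K_def by simp
  then have \<epsilon>: "\<epsilon> > 0"
    unfolding \<epsilon>_def using neg by (intro divide_pos_pos) auto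
  obtain Z where Z: "Z \<in> E" and close: "AE \<omega> in M. \<bar>Z0 \<omega> - Z \<omega>\<bar> \<le> \<epsilon>"
    using dense Z0 \<epsilon> unfolding Linf_dense_in_DLinf_def by blast
  have Z_Linf: "Z \<in> Linf M"
    using dense Z unfolding Linf_dense_in_DLinf_def by blast
  have "(\<integral>\<omega>. Z \<omega> * X \<omega> \<partial>M) \<le> (\<integral>\<omega>. Z0 \<omega> * X \<omega> \<partial>M) + \<epsilon> * K"
    unfolding K_def using Z0 Z_Linf X close by (intro integral_mult_Linf_le) auto
  also have "\<dots> < 0"
  proof -
    have "\<epsilon> * K \<le> - (\<integral>\<omega>. Z0 \<omega> * X \<omega> \<partial>M) / 2"
      unfolding \<epsilon>_def using neg K by (simp add: field_simps)
    then show ?thesis using neg by linarith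
  qed
  finally show ?thesis
    using Z Z_Linf X by (blast intro: integrable_Linf_mult)
qed

lemma convex_contains_negative_multiple:
  fixes C :: "'a::euclidean_space set"
  assumes "convex C" and "C \<noteq> {}" and neg: "\<And>a. a \<noteq> 0 \<Longrightarrow> \<exists>c\<in>C. inner a c < 0"
  shows "\<exists>s>0. - (s *\<^sub>R v) \<in> C"
proof (rule ccontr)
  assume no_multiple: "\<not> ?thesis"
  define T where "T = (\<lambda>s. - (s *\<^sub>R v)) ` {0<..}"
  have "convex T"
    unfolding T_def by (rule convex_linear_image) (auto intro: linearI simp: algebra_simps)
  moreover have "T \<noteq> {}" "T \<inter> C = {}"
    using no_multiple unfolding T_def by auto
  ultimately obtain a b where "a \<noteq> 0" and T_below: "\<forall>x\<in>T. inner a x \<le> b"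
    and C_above: "\<forall>x\<in>C. inner a x \<ge> b"
    using separating_hyperplane_sets[OF _ \<open>convex C\<close> _ \<open>C \<noteq> {}\<close>] by metis
  have "b \<ge> 0"
  proof (rule ccontr)
    assume "\<not> b \<ge> 0"
    define s where "s = - b / (\<bar>inner a v\<bar> + 1)"
    have "s > 0" "s * \<bar>inner a v\<bar> < - b"
      using \<open>\<not> b \<ge> 0\<close> by (auto simp: s_def field_simps)
    moreover have "- (s * inner a v) \<le> b"
      using T_below \<open>s > 0\<close> unfolding T_def by auto
    moreover have "s * inner a v \<le> s * \<bar>inner a v\<bar>"
      using \<open>s > 0\<close> by (intro mult_left_mono) auto
    ultimately show False
      by linarith
  qed
  then show False
    using neg[OF \<open>a \<noteq> 0\<close>] C_above by force
qed

lemma dual_set_mix: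
  assumes "dual_set M Q" "Z1 \<in> Q" "Z2 \<in> Q" "t \<in> {0..1}"
  shows "mix t Z1 Z2 \<in> Q"
  using assms by (simp add: dual_set_def)

lemma mix_mix_in_dual_set:
  assumes Q: "dual_set M Q" and Y: "mix s Y Zt \<in> Q" "s \<in> {0<..<1}"
    and Z: "Z \<in> Q" and Zt: "Zt \<in> Q" and t: "t \<in> {0<..<1}"
  shows "\<exists>s'\<in>{0<..<1}. mix s' Y (mix t Z Zt) \<in> Q"
proof -
  define a where "a = (1 - t) / 2"
  define s' where "s' = a * s"
  define u where "u = (1 - s') * t / (1 - a)"
  have a: "0 < a" "a < 1" and s': "0 < s'" "s' < 1"
    using Y(2) t mult_strict_mono[of a 1 s 1] by (auto simp: a_def s'_def)
  have "(1 - s') * t \<le> t"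
    using s' t by (intro mult_left_le_one_le) auto
  moreover have "t \<le> 1 - a"
    using t by (simp add: a_def field_simps)
  ultimately have "(1 - s') * t \<le> 1 - a"
    by linarith
  then have u: "u \<in> {0..1}"
    using a s' t by (auto simp: u_def)
  have u_weight: "(1 - a) * u = (1 - s') * t"
    using a by (simp add: u_def)
  have "mix s' Y (mix t Z Zt) = mix a (mix s Y Zt) (mix u Z Zt)"
  proof
    fix \<omega>
    have "mix a (mix s Y Zt) (mix u Z Zt) \<omega>
        = s' * Y \<omega> + ((1 - a) * u) * Z \<omega> + (a * (1 - s) + (1 - a) - (1 - a) * u) * Zt \<omega>"
      by (simp add: mix_def s'_def algebra_simps)
    also have "\<dots> = mix s' Y (mix t Z Zt) \<omega>"
      unfolding u_weight by (simp add: mix_def s'_def algebra_simps)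
    finally show "mix s' Y (mix t Z Zt) \<omega> = mix a (mix s Y Zt) (mix u Z Zt) \<omega>" ..
  qed
  also have "\<dots> \<in> Q"
    using a by (intro dual_set_mix[OF Q] Y Z Zt u) auto
  finally show ?thesis
    using s' by auto
qed

lemma ae_saturated_Qt_max:
  assumes Q: "dual_set M Q"
  shows "ae_saturated M (Qt_max M Q)"
  unfolding ae_saturated_def
proof (intro ballI allI impI)
  fix Zt Zt'
  assume "Zt \<in> Qt_max M Q" and Zt': "Zt' \<in> borel_measurable M \<and> (AE \<omega> in M. Zt \<omega> = Zt' \<omega>)"
  then obtain E where "Zt \<in> Q" and pos: "AE \<omega> in M. Zt \<omega> > 0" and dense: "Linf_dense_in_DLinf M E"
    and interior: "\<forall>Z\<in>E. \<exists>t\<in>{0<..<1}. mix t Z Zt \<in> Q"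
    unfolding Qt_max_def by blast
  have saturated: "ae_saturated M Q"
    using Q by (simp add: dual_set_def)
  have "\<exists>t\<in>{0<..<1}. mix t Z Zt' \<in> Q" if "Z \<in> E" for Z
  proof -
    obtain t where t: "t \<in> {0<..<1}" and "mix t Z Zt \<in> Q"
      using interior \<open>Z \<in> E\<close> by blast
    moreover have "Z \<in> borel_measurable M"
      using dense \<open>Z \<in> E\<close> by (auto simp: Linf_dense_in_DLinf_def Dens_def)
    then have "mix t Z Zt' \<in> borel_measurable M"
      using Zt' unfolding mix_def[abs_def] by auto
    moreover have "AE \<omega> in M. mix t Z Zt \<omega> = mix t Z Zt' \<omega>"
      using Zt' by (auto simp: mix_def)
    ultimately show ?thesis
      using saturated unfolding ae_saturated_def by blast
  qed
  moreover have "Zt' \<in> Q" "AE \<omega> in M. Zt' \<omega> > 0"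
    using saturated \<open>Zt \<in> Q\<close> Zt' pos unfolding ae_saturated_def by auto
  ultimately show "Zt' \<in> Qt_max M Q"
    using dense unfolding Qt_max_def by blast
qed

lemma cond_MIX_Qt_max:
  assumes Q: "dual_set M Q"
  shows "cond_MIX Q (Qt_max M Q)"
  unfolding cond_MIX_def
proof (intro ballI)
  fix Z Zt t assume Z: "Z \<in> Q" and "Zt \<in> Qt_max M Q" and t: "t \<in> {0<..<(1::real)}"
  then obtain E where Zt: "Zt \<in> Q" and pos: "AE \<omega> in M. Zt \<omega> > 0"
    and dense: "Linf_dense_in_DLinf M E" and interior: "\<forall>Y\<in>E. \<exists>s\<in>{0<..<1}. mix s Y Zt \<in> Q"
    unfolding Qt_max_def by blast
  have "mix t Z Zt \<in> Q"
    using t by (intro dual_set_mix[OF Q Z Zt]) auto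
  moreover have "AE \<omega> in M. mix t Z Zt \<omega> > 0"
  proof -
    have "AE \<omega> in M. Z \<omega> \<ge> 0"
      using Q Z by (auto simp: dual_set_def Dens_def)
    with pos show ?thesis
      by eventually_elim (use t in \<open>auto simp: mix_def intro!: add_nonneg_pos\<close>)
  qed
  moreover have "\<exists>s'\<in>{0<..<1}. mix s' Y (mix t Z Zt) \<in> Q" if "Y \<in> E" for Y
    using interior that mix_mix_in_dual_set[OF Q _ _ Z Zt t] by blast
  ultimately show "mix t Z Zt \<in> Qt_max M Q"
    using dense unfolding Qt_max_def by blast
qed

definition mean_excess ::
    "'a measure \<Rightarrow> real \<Rightarrow> ('n \<Rightarrow> real) \<Rightarrow> ('n \<Rightarrow> 'a \<Rightarrow> real) \<Rightarrow> ('a \<Rightarrow> real) \<Rightarrow> 'n \<Rightarrow> real"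
  where
  "mean_excess M r S0 S1 Z i = (\<integral>\<omega>. Z \<omega> * (ret S0 S1 i \<omega> - r) \<partial>M)"

lemma excess_zero: "excess r S0 S1 (\<lambda>_. 0) = (\<lambda>_. 0)"
  by (simp add: excess_def[abs_def])

lemma mult_excess_eq_sum:
  "Z \<omega> * excess r S0 S1 p \<omega> = (\<Sum>i\<in>UNIV. p i * (Z \<omega> * (ret S0 S1 i \<omega> - r)))"
  by (simp add: excess_def sum_distrib_left algebra_simps)

lemma
  fixes p :: "'n::finite \<Rightarrow> real"
  assumes "\<And>i. integrable M (\<lambda>\<omega>. Z \<omega> * (ret S0 S1 i \<omega> - r))"
  shows integrable_mult_excess: "integrable M (\<lambda>\<omega>. Z \<omega> * excess r S0 S1 p \<omega>)"
    and integral_mult_excess: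
      "(\<integral>\<omega>. Z \<omega> * excess r S0 S1 p \<omega> \<partial>M) = (\<Sum>i\<in>UNIV. p i * mean_excess M r S0 S1 Z i)"
  using assms by (simp_all add: mult_excess_eq_sum mean_excess_def)

lemma mean_excess_mix:
  assumes "integrable M (\<lambda>\<omega>. Z1 \<omega> * (ret S0 S1 i \<omega> - r))"
    and "integrable M (\<lambda>\<omega>. Z2 \<omega> * (ret S0 S1 i \<omega> - r))"
  shows "mean_excess M r S0 S1 (mix t Z1 Z2) i
    = t * mean_excess M r S0 S1 Z1 i + (1 - t) * mean_excess M r S0 S1 Z2 i"
proof -
  have "(\<lambda>\<omega>. mix t Z1 Z2 \<omega> * (ret S0 S1 i \<omega> - r))
      = (\<lambda>\<omega>. t * (Z1 \<omega> * (ret S0 S1 i \<omega> - r)) + (1 - t) * (Z2 \<omega> * (ret S0 S1 i \<omega> - r)))"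
    by (auto simp: mix_def algebra_simps)
  then show ?thesis
    using assms by (simp add: mean_excess_def)
qed

locale one_period_market =
  fixes M :: "'a measure" and r :: real and S0 :: "'n::finite \<Rightarrow> real" and S1 :: "'n \<Rightarrow> 'a \<Rightarrow> real"
  assumes market: "market M r S0 S1"
begin

sublocale prob_space M
  using market by (simp add: market_def)

lemma integrable_excess_ret: "integrable M (\<lambda>\<omega>. ret S0 S1 i \<omega> - r)"
  using market by (simp add: market_def)

lemma integrable_excess: "integrable M (excess r S0 S1 p)"
  by (rule integrable_mult_excess[where Z="\<lambda>_. 1", simplified]) (rule integrable_excess_ret)

lemma integral_excess:
  "integral\<^sup>L M (excess r S0 S1 p) = (\<Sum>i\<in>UNIV. p i * mean_excess M r S0 S1 (\<lambda>_. 1) i)"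
  by (rule integral_mult_excess[where Z="\<lambda>_. 1", simplified]) (rule integrable_excess_ret)

lemma excess_AE_zero_imp_zero:
  assumes "AE \<omega> in M. excess r S0 S1 p \<omega> = 0"
  shows "p = (\<lambda>_. 0)"
proof -
  have S0_pos: "S0 i > 0" for i
    using market by (simp add: market_def)
  define th where "th i = p i / S0 i" for i
  define th0 where "th0 = - (\<Sum>i\<in>UNIV. p i)"
  have initial: "th0 + (\<Sum>i\<in>UNIV. th i * S0 i) = 0"
    using S0_pos by (simp add: th_def th0_def less_imp_neq[symmetric])
  have final: "th0 * (1 + r) + (\<Sum>i\<in>UNIV. th i * S1 i \<omega>) = excess r S0 S1 p \<omega>" for \<omega>
  proof -
    have "excess r S0 S1 p \<omega> = (\<Sum>i\<in>UNIV. th i * S1 i \<omega> - p i - r * p i)"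
      unfolding excess_def ret_def th_def
      by (rule sum.cong) (use S0_pos in \<open>auto simp: field_simps less_imp_neq[symmetric]\<close>)
    then show ?thesis
      unfolding th0_def by (simp add: sum_subtractf sum_distrib_left algebra_simps)
  qed
  have "AE \<omega> in M. th0 * (1 + r) + (\<Sum>i\<in>UNIV. th i * S1 i \<omega>) = 0"
    using assms by (simp add: final)
  then have "\<forall>i. th i = 0"
    using market initial unfolding market_def by blast
  then show ?thesis
    using S0_pos by (auto simp: th_def less_imp_neq[symmetric])
qed

lemma martingale_density_excess_not_AE_nonneg:
  assumes Zt: "Zt \<in> Pset M r S0 S1" and p: "p \<noteq> (\<lambda>_. 0)"
  shows "\<not> (AE \<omega> in M. excess r S0 S1 p \<omega> \<ge> 0)"
proof
  assume nonneg: "AE \<omega> in M. excess r S0 S1 p \<omega> \<ge> 0"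
  have pos: "AE \<omega> in M. Zt \<omega> > 0"
    and int: "\<And>i. integrable M (\<lambda>\<omega>. Zt \<omega> * (ret S0 S1 i \<omega> - r))"
    and mean0: "\<And>i. mean_excess M r S0 S1 Zt i = 0"
    using Zt by (auto simp: Pset_def Mset_def mean_excess_def)
  have "AE \<omega> in M. Zt \<omega> * excess r S0 S1 p \<omega> \<ge> 0"
    using nonneg pos by eventually_elim auto
  moreover have "(\<integral>\<omega>. Zt \<omega> * excess r S0 S1 p \<omega> \<partial>M) = 0"
    by (simp add: integral_mult_excess[OF int] mean0)
  ultimately have "AE \<omega> in M. Zt \<omega> * excess r S0 S1 p \<omega> = 0"
    using integral_nonneg_eq_0_iff_AE[OF integrable_mult_excess[OF int]] by simp
  then have "AE \<omega> in M. excess r S0 S1 p \<omega> = 0"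
    using pos by eventually_elim auto
  with p show False
    using excess_AE_zero_imp_zero by blast
qed

end

locale dual_market = one_period_market +
  fixes Q :: "('a \<Rightarrow> real) set"
  assumes dual: "dual_set M Q"
    and integrable_dual_ret: "\<forall>i. \<forall>Z\<in>Q. integrable M (\<lambda>\<omega>. Z \<omega> * ret S0 S1 i \<omega>)"
begin

lemma one_in_dual: "(\<lambda>_. 1) \<in> Q"
  using dual by (simp add: dual_set_def)

lemma dual_density: "Z \<in> Q \<Longrightarrow> Z \<in> Dens M"
  using dual by (auto simp: dual_set_def)

lemma integrable_dual_excess_ret:
  assumes "Z \<in> Q"
  shows "integrable M (\<lambda>\<omega>. Z \<omega> * (ret S0 S1 i \<omega> - r))"
proof -
  have "integrable M (\<lambda>\<omega>. Z \<omega> * ret S0 S1 i \<omega> - r * Z \<omega>)"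
    using assms dual_density[OF assms] integrable_dual_ret by (auto simp: Dens_def)
  then show ?thesis
    by (simp add: algebra_simps)
qed

lemma exp_negZ_excess:
  assumes "Z \<in> Q"
  shows "exp_negZ M Z (excess r S0 S1 p) = ereal (- (\<Sum>i\<in>UNIV. p i * mean_excess M r S0 S1 Z i))"
  using dual_density[OF assms] integrable_dual_excess_ret[OF assms] integrable_excess
  by (subst exp_negZ_eq_integral)
    (auto simp: Dens_def integrable_mult_excess integral_mult_excess)

lemma rho_excess_ge_neg_mean:
  "ereal (- integral\<^sup>L M (excess r S0 S1 p)) \<le> rho M Q (excess r S0 S1 p)"
proof -
  have "exp_negZ M (\<lambda>_. 1) (excess r S0 S1 p) \<le> rho M Q (excess r S0 S1 p)"
    unfolding rho_def using one_in_dual by (rule SUP_upper)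
  then show ?thesis
    by (simp add: exp_negZ_excess[OF one_in_dual] integral_excess)
qed

lemma rho_excess_zero: "rho M Q (excess r S0 S1 (\<lambda>_. 0)) = 0"
proof -
  have "Q \<noteq> {}"
    using one_in_dual by blast
  then show ?thesis
    by (simp add: rho_def excess_zero exp_negZ_def)
qed

lemma rho_excess_add_le:
  assumes "\<And>Z. Z \<in> Q \<Longrightarrow> (\<Sum>i\<in>UNIV. q i * mean_excess M r S0 S1 Z i) \<ge> 0"
  shows "rho M Q (excess r S0 S1 (\<lambda>i. p i + q i)) \<le> rho M Q (excess r S0 S1 p)"
  unfolding rho_def
proof (rule SUP_mono)
  fix Z assume "Z \<in> Q"
  then show "\<exists>Z'\<in>Q. exp_negZ M Z (excess r S0 S1 (\<lambda>i. p i + q i))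
      \<le> exp_negZ M Z' (excess r S0 S1 p)"
    using assms[of Z] by (intro bexI[of _ Z]) (auto simp: exp_negZ_excess distrib_right sum.distrib)
qed

lemma no_rho_arbitrage_imp_negative_mean_excess:
  assumes Pi0_rho: "Pi0_rho M Q r S0 S1 = {(\<lambda>_. 0)}" and no_arbitrage: "\<not> rho_arbitrage M Q r S0 S1"
    and q: "q \<noteq> (\<lambda>_. 0)"
  shows "\<exists>Z\<in>Q. (\<Sum>i\<in>UNIV. q i * mean_excess M r S0 S1 Z i) < 0"
proof (rule ccontr)
  assume "\<not> ?thesis"
  then have nonneg: "\<And>Z. Z \<in> Q \<Longrightarrow> (\<Sum>i\<in>UNIV. q i * mean_excess M r S0 S1 Z i) \<ge> 0"
    by force
  have "integral\<^sup>L M (excess r S0 S1 q) \<ge> 0"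
    using nonneg[OF one_in_dual] by (simp add: integral_excess)
  then consider "integral\<^sup>L M (excess r S0 S1 q) = 0" | "integral\<^sup>L M (excess r S0 S1 q) > 0"
    by linarith
  then show False
  proof cases
    case 1
    have "rho M Q (excess r S0 S1 q) \<le> 0"
      using rho_excess_add_le[OF nonneg, of "\<lambda>_. 0"] by (simp add: rho_excess_zero)
    moreover have "rho M Q (excess r S0 S1 p) \<ge> 0" if "p \<in> Pi0 M r S0 S1" for p
      using rho_excess_ge_neg_mean[of p] that by (simp add: Pi0_def zero_ereal_def)
    ultimately have "q \<in> Pi0_rho M Q r S0 S1"
      using 1 by (force simp: Pi0_rho_def Pi0_def)
    with Pi0_rho q show False
      by simp
  next
    case 2
    have "\<not> rho_efficient M Q r S0 S1 p" for p
    proof -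
      have "integral\<^sup>L M (excess r S0 S1 (\<lambda>i. p i + q i)) > integral\<^sup>L M (excess r S0 S1 p)"
        using 2 by (simp add: integral_excess distrib_right sum.distrib)
      then show ?thesis
        using rho_excess_add_le[OF nonneg, of p] unfolding rho_efficient_def by force
    qed
    with no_arbitrage show False
      unfolding rho_arbitrage_def by blast
  qed
qed

lemma negative_mean_excess_imp_martingale_density:
  assumes neg: "\<And>q. q \<noteq> (\<lambda>_. 0) \<Longrightarrow> \<exists>Z\<in>Q. (\<Sum>i\<in>UNIV. q i * mean_excess M r S0 S1 Z i) < 0"
    and Qt: "Qt \<subseteq> Q" "Zt \<in> Qt" and POS: "cond_POS M Qt" and MIX: "cond_MIX Q Qt"
  shows "Qt \<inter> Pset M r S0 S1 \<noteq> {}"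
proof -
  define m where "m Z = (\<chi> i. mean_excess M r S0 S1 Z i)" for Z
  have m_mix: "m (mix t Z1 Z2) = t *\<^sub>R m Z1 + (1 - t) *\<^sub>R m Z2" if "Z1 \<in> Q" "Z2 \<in> Q" for t Z1 Z2
    using that by (simp add: m_def vec_eq_iff mean_excess_mix integrable_dual_excess_ret)
  have "convex (m ` Q)"
  proof (rule convexI)
    fix x y and u v :: real
    assume "x \<in> m ` Q" "y \<in> m ` Q" "0 \<le> u" "0 \<le> v" "u + v = 1"
    then obtain Z1 Z2 where "Z1 \<in> Q" "Z2 \<in> Q" "x = m Z1" "y = m Z2" "v = 1 - u" "u \<in> {0..1}"
      by auto
    then have "u *\<^sub>R x + v *\<^sub>R y = m (mix u Z1 Z2)" "mix u Z1 Z2 \<in> Q"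
      by (simp_all add: m_mix dual_set_mix[OF dual])
    then show "u *\<^sub>R x + v *\<^sub>R y \<in> m ` Q"
      by (metis image_eqI)
  qed
  moreover have "m ` Q \<noteq> {}"
    using one_in_dual by blast
  moreover have "\<exists>c\<in>m ` Q. inner a c < 0" if "a \<noteq> 0" for a
  proof -
    have "(\<lambda>i. a $ i) \<noteq> (\<lambda>_. 0)"
      using that by (simp add: vec_eq_iff fun_eq_iff)
    then obtain Z where "Z \<in> Q" "(\<Sum>i\<in>UNIV. a $ i * mean_excess M r S0 S1 Z i) < 0"
      using neg by blast
    then show ?thesis
      unfolding m_def inner_vec_def by force
  qed
  ultimately obtain s where s: "s > 0" "- (s *\<^sub>R m Zt) \<in> m ` Q"
    by (metis convex_contains_negative_multiple)
  then obtain Z where Z: "Z \<in> Q" "m Z = - (s *\<^sub>R m Zt)"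
    by (metis imageE)
  define t where "t = 1 / (1 + s)"
  have t: "t \<in> {0<..<1}" and t_s: "t * s = 1 - t"
    using s by (auto simp: t_def field_simps)
  define W where "W = mix t Z Zt"
  have "W \<in> Qt"
    using MIX Z(1) Qt(2) t unfolding W_def cond_MIX_def by blast
  then have "W \<in> Q" "AE \<omega> in M. W \<omega> > 0"
    using Qt(1) POS unfolding cond_POS_def by blast+
  have "Zt \<in> Q"
    using Qt by blast
  have "m W = (1 - t - t * s) *\<^sub>R m Zt"
    unfolding W_def m_mix[OF Z(1) \<open>Zt \<in> Q\<close>] Z(2) by (simp add: algebra_simps)
  then have "mean_excess M r S0 S1 W i = 0" for i
    using t_s by (simp add: m_def vec_eq_iff)
  then have "W \<in> Pset M r S0 S1"
    using \<open>W \<in> Q\<close> \<open>AE \<omega> in M. W \<omega> > 0\<close> dual_density integrable_dual_excess_ret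
    unfolding Pset_def Mset_def mean_excess_def by blast
  with \<open>W \<in> Qt\<close> show ?thesis
    by blast
qed

lemma positive_rho_imp_no_rho_arbitrage:
  assumes pos: "\<And>p. p \<noteq> (\<lambda>_. 0) \<Longrightarrow> rho M Q (excess r S0 S1 p) > 0"
  shows "\<not> rho_arbitrage M Q r S0 S1"
proof -
  have "rho_efficient M Q r S0 S1 (\<lambda>_. 0)"
    unfolding rho_efficient_def
  proof (intro conjI notI)
    show "integral\<^sup>L M (excess r S0 S1 (\<lambda>_. 0)) \<ge> 0"
      by (simp add: excess_zero)
  next
    assume "\<exists>p. integral\<^sup>L M (excess r S0 S1 p) \<ge> integral\<^sup>L M (excess r S0 S1 (\<lambda>_. 0)) \<and>
      rho M Q (excess r S0 S1 p) \<le> rho M Q (excess r S0 S1 (\<lambda>_. 0)) \<and>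
      (integral\<^sup>L M (excess r S0 S1 p) > integral\<^sup>L M (excess r S0 S1 (\<lambda>_. 0)) \<or>
       rho M Q (excess r S0 S1 p) < rho M Q (excess r S0 S1 (\<lambda>_. 0)))"
    then obtain p where le: "rho M Q (excess r S0 S1 p) \<le> rho M Q (excess r S0 S1 (\<lambda>_. 0))"
      and strict: "integral\<^sup>L M (excess r S0 S1 p) > integral\<^sup>L M (excess r S0 S1 (\<lambda>_. 0)) \<or>
        rho M Q (excess r S0 S1 p) < rho M Q (excess r S0 S1 (\<lambda>_. 0))"
      by blast
    from strict have "p \<noteq> (\<lambda>_. 0)"
      by auto
    from pos[OF this] le show False
      by (simp add: rho_excess_zero)
  qed
  then show ?thesis
    unfolding rho_arbitrage_def by blast
qed

lemma martingale_density_imp_no_rho_arbitrage: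
  assumes Zt: "Zt \<in> Pset M r S0 S1"
    and dense: "Linf_dense_in_DLinf M E" and interior: "\<forall>Z\<in>E. \<exists>t\<in>{0<..<1}. mix t Z Zt \<in> Q"
  shows "\<not> rho_arbitrage M Q r S0 S1"
proof (rule positive_rho_imp_no_rho_arbitrage)
  fix p
  let ?X = "excess r S0 S1 p"
  assume "p \<noteq> (\<lambda>_. 0)"
  obtain Z where "Z \<in> E" and ZX: "integrable M (\<lambda>\<omega>. Z \<omega> * ?X \<omega>)" "(\<integral>\<omega>. Z \<omega> * ?X \<omega> \<partial>M) < 0"
    using dense_density_with_negative_integral[OF dense integrable_excess
        martingale_density_excess_not_AE_nonneg[OF Zt \<open>p \<noteq> (\<lambda>_. 0)\<close>]] by blast
  then obtain t where t: "t \<in> {0<..<1}" and W: "mix t Z Zt \<in> Q"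
    using interior by blast
  have Zt_int: "\<And>i. integrable M (\<lambda>\<omega>. Zt \<omega> * (ret S0 S1 i \<omega> - r))"
    and Zt_mean: "\<And>i. mean_excess M r S0 S1 Zt i = 0"
    using Zt unfolding Pset_def Mset_def mean_excess_def by blast+
  have "(\<integral>\<omega>. Zt \<omega> * ?X \<omega> \<partial>M) = 0"
    by (simp add: integral_mult_excess[OF Zt_int] Zt_mean)
  moreover have "(\<lambda>\<omega>. mix t Z Zt \<omega> * ?X \<omega>) = (\<lambda>\<omega>. t * (Z \<omega> * ?X \<omega>) + (1 - t) * (Zt \<omega> * ?X \<omega>))"
    by (simp add: mix_def fun_eq_iff algebra_simps)
  ultimately have "(\<integral>\<omega>. mix t Z Zt \<omega> * ?X \<omega> \<partial>M) = t * (\<integral>\<omega>. Z \<omega> * ?X \<omega> \<partial>M)"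
    using ZX(1) integrable_mult_excess[OF Zt_int] by simp
  also have "\<dots> < 0"
    using t ZX(2) by (simp add: mult_pos_neg)
  finally have "exp_negZ M (mix t Z Zt) ?X > 0"
    using integral_mult_excess[OF integrable_dual_excess_ret[OF W]]
    by (simp add: exp_negZ_excess[OF W])
  also have "exp_negZ M (mix t Z Zt) ?X \<le> rho M Q ?X"
    unfolding rho_def using W by (rule SUP_upper)
  finally show "rho M Q ?X > 0" .
qed

end

theorem theorem4p20:
  fixes M :: "'a measure" and r :: real
    and S0 :: "'n::finite \<Rightarrow> real" and S1 :: "'n \<Rightarrow> 'a \<Rightarrow> real"
    and Q :: "('a \<Rightarrow> real) set"
  assumes mkt: "market M r S0 S1"
    and dual: "dual_set M Q"
    and condI: "\<forall>i. \<forall>Z\<in>Q. integrable M (\<lambda>\<omega>. Z \<omega> * ret S0 S1 i \<omega>)"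
    and Pi0rho: "Pi0_rho M Q r S0 S1 = {(\<lambda>_. 0)}"
    and Qmax: "Qt_max M Q \<noteq> {}"
  shows "(\<not> rho_arbitrage M Q r S0 S1
           \<longleftrightarrow> (\<exists>Qt. Qt \<noteq> {} \<and> Qt \<subseteq> Q \<and> ae_saturated M Qt \<and> cond_POS M Qt \<and>
                    cond_MIX Q Qt \<and> cond_INT M Q Qt \<and> Qt \<inter> Pset M r S0 S1 \<noteq> {}))
       \<and> (\<not> rho_arbitrage M Q r S0 S1
           \<longleftrightarrow> (\<forall>Qt. Qt \<noteq> {} \<and> Qt \<subseteq> Q \<and> ae_saturated M Qt \<and> cond_POS M Qt \<and>
                    cond_MIX Q Qt \<and> cond_INT M Q Qt \<longrightarrow> Qt \<inter> Pset M r S0 S1 \<noteq> {}))"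
proof -
  interpret dual_market M r S0 S1 Q
    using mkt dual condI by unfold_locales
  let ?admissible = "\<lambda>Qt. Qt \<noteq> {} \<and> Qt \<subseteq> Q \<and> ae_saturated M Qt \<and> cond_POS M Qt \<and>
    cond_MIX Q Qt \<and> cond_INT M Q Qt"
  have Qt_max: "?admissible (Qt_max M Q)"
    using Qmax ae_saturated_Qt_max[OF dual] cond_MIX_Qt_max[OF dual]
    by (auto simp: Qt_max_def cond_POS_def cond_INT_def)
  have a_imp_c: "Qt \<inter> Pset M r S0 S1 \<noteq> {}"
    if no_arbitrage: "\<not> rho_arbitrage M Q r S0 S1" and admissible: "?admissible Qt" for Qt
  proof -
    obtain Zt where "Zt \<in> Qt"
      using admissible by blast
    then show ?thesis
      using admissible
      by (intro negative_mean_excess_imp_martingale_density[of Qt Zt]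
          no_rho_arbitrage_imp_negative_mean_excess[OF Pi0rho no_arbitrage]) simp_all
  qed
  have b_imp_a: "\<not> rho_arbitrage M Q r S0 S1"
    if "cond_INT M Q Qt" "Qt \<inter> Pset M r S0 S1 \<noteq> {}" for Qt
    using that martingale_density_imp_no_rho_arbitrage unfolding cond_INT_def by blast
  show ?thesis
    apply (intro conjI iffI)
    subgoal using Qt_max a_imp_c[OF _ Qt_max] by blast
    subgoal using b_imp_a by blast
    subgoal using a_imp_c by blast
    subgoal using Qt_max b_imp_a by blast
    done
qed

end
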